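(* Fix $\rho>0$. There exists a constant $C=C(\rho)$ such that for all positive integers $K,L$, letting $\tilde I\subset\mathbb{Z}$ be an interval of $M=LK$ consecutive sites written as the union of $L$ disjoint intervals $I_1,\dots,I_L$ of $K$ consecutive sites each, with $\mathcal{M}_j=\sigma\big(\sum_{x\in I_j}\eta(x)\big)$ and $\tilde{\mathcal{M}}=\sigma\big(\sum_{x\in\tilde I}\eta(x)\big)$, the random variable $$V_2(\eta)=\sum_{j=1}^{L}E_{\nu_\rho}\Big(\sum_{x\in I_j}V_g(\eta(x))\,\Big|\,\mathcal{M}_j\Big)-E_{\nu_\rho}\Big(\sum_{x\in\tilde I}V_g(\eta(x))\,\Big|\,\tilde{\mathcal{M}}\Big)$$ satisfies $\mathrm{Var}(V_2,\nu_\rho)\le CL$.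
   Context: $g(k)=1_{\{k\ge1\}}$ for $k\in\mathbb{N}=\{0,1,2,\dots\}$. $\nu_\rho$ is the product measure on $\mathbb{N}^{\mathbb{Z}}$ with geometric marginals $\nu_\rho(\eta(x)=k)=\frac{1}{1+\rho}\big(\frac{\rho}{1+\rho}\big)^k$, $k\ge0$ (mean $\rho$). $\phi(\rho)=E_{\nu_\rho}[g(\eta(0))]=\frac{\rho}{1+\rho}$ and $V_g(\eta(x))=g(\eta(x))-\phi(\rho)-\phi'(\rho)[\eta(x)-\rho]$. *)

theory Defs
  imports "HOL-Probability.Probability"
begin

text \<open>The product measure nu_rho on configurations eta : Z -> N with geometric marginals
  P(eta(x) = k) = (1/(1+rho)) (rho/(1+rho))^k, i.e. geometric_pmf with success prob 1/(1+rho).\<close>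
definition nu :: "real \<Rightarrow> (int \<Rightarrow> nat) measure" where
  "nu \<rho> = (\<Pi>\<^sub>M x\<in>(UNIV::int set). measure_pmf (geometric_pmf (1 / (1 + \<rho>))))"

definition g :: "nat \<Rightarrow> real" where
  "g k = (if k \<ge> 1 then 1 else 0)"

definition phi :: "real \<Rightarrow> real" where
  "phi \<rho> = \<rho> / (1 + \<rho>)"

definition Vg :: "real \<Rightarrow> nat \<Rightarrow> real" where
  "Vg \<rho> k = g k - phi \<rho> - deriv phi \<rho> * (real k - \<rho>)"

definition sum_sigma :: "real \<Rightarrow> int set \<Rightarrow> (int \<Rightarrow> nat) measure" where
  "sum_sigma \<rho> I = vimage_algebra (space (nu \<rho>)) (\<lambda>\<eta>. \<Sum>x\<in>I. \<eta> x) (count_space UNIV)"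

definition cond_block :: "real \<Rightarrow> int set \<Rightarrow> (int \<Rightarrow> nat) \<Rightarrow> real" where
  "cond_block \<rho> I = real_cond_exp (nu \<rho>) (sum_sigma \<rho> I) (\<lambda>\<eta>. \<Sum>x\<in>I. Vg \<rho> (\<eta> x))"

definition V2 :: "real \<Rightarrow> nat \<Rightarrow> nat \<Rightarrow> int \<Rightarrow> (int \<Rightarrow> nat) \<Rightarrow> real" where
  "V2 \<rho> K L a \<eta> =
     (\<Sum>j\<in>{1..L}. cond_block \<rho> {a + int ((j - 1) * K) ..< a + int (j * K)} \<eta>)
     - cond_block \<rho> {a ..< a + int (L * K)} \<eta>"

definition variance_of :: "'a measure \<Rightarrow> ('a \<Rightarrow> real) \<Rightarrow> real" where
  "variance_of M X = (\<integral>\<omega>. (X \<omega> - (\<integral>\<omega>'. X \<omega>' \<partial>M))\<^sup>2 \<partial>M)"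

end

theory Submission
  imports Defs
begin

text \<open>
  Under \<open>nu \<rho>\<close> the occupation variables \<open>\<eta>(x)\<close> are i.i.d.\ geometric with mean \<open>\<rho>\<close>.
  For a block \<open>A\<close> of \<open>K\<close> sites the block sum \<open>S\<^sub>A\<close> is negative binomial, and by
  exchangeability a fixed site of \<open>A\<close> is occupied with conditional probability
  \<open>n / (n + K - 1)\<close> given \<open>S\<^sub>A = n\<close>.  Hence the conditional block expectation
  \<open>E(\<Sum>\<^sub>x\<^sub>\<in>\<^sub>A V\<^sub>g(\<eta>(x)) | S\<^sub>A)\<close> equals a.s.\ the explicit block profile
  \<open>F\<^sub>K(S\<^sub>A) = K S\<^sub>A/(S\<^sub>A + K - 1) - K \<phi>(\<rho>) - \<phi>'(\<rho>) (S\<^sub>A - K\<rho>)\<close>.  An algebraic identity shows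
  \<open>F\<^sub>K(n)\<^sup>2 \<le> 2 + 2 (n - K\<rho>)\<^sup>4 / K\<^sup>2\<close>, and the fourth-moment formula for sums of i.i.d.\
  centred variables bounds \<open>E F\<^sub>K(S\<^sub>A)\<^sup>2\<close> by a constant \<open>C\<^sub>0\<close> independent of \<open>K\<close>.
  Finally \<open>V\<^sub>2\<close> is a.s.\ a sum of \<open>L\<close> independent block profiles minus one more profile, so
  \<open>Var V\<^sub>2 \<le> 2 L C\<^sub>0 + 2 C\<^sub>0 \<le> 4 C\<^sub>0 L\<close> by Bienaym\'e's identity.
\<close>

lemma (in prob_space) indep_var_blocks:
  assumes "indep_vars M' X I" "A \<inter> B = {}" "A \<subseteq> I" "B \<subseteq> I"
    and "f \<in> measurable (PiM A M') N1" "h \<in> measurable (PiM B M') N2"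
  shows "indep_var N1 (\<lambda>\<omega>. f (\<lambda>i\<in>A. X i \<omega>)) N2 (\<lambda>\<omega>. h (\<lambda>i\<in>B. X i \<omega>))"
  using indep_var_compose[OF indep_var_restrict[OF assms(1-4)] assms(5,6)]
  by (simp add: comp_def)

lemma subalgebra_vimage_algebra:
  assumes "T \<in> measurable M N"
  shows "subalgebra M (vimage_algebra (space M) T N)"
  unfolding subalgebra_def using assms
  by (auto simp: sets_vimage_algebra2 measurable_space intro: measurable_sets)

text \<open>The proof decomposes every \<open>T\<close>-measurable set into countably many level sets.\<close>
lemma (in prob_space) real_cond_exp_discrete:
  fixes T :: "'a \<Rightarrow> nat" and X :: "'a \<Rightarrow> real" and h :: "nat \<Rightarrow> real"
  assumes T[measurable]: "T \<in> measurable M (count_space UNIV)"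
    and X: "integrable M X" and hT: "integrable M (\<lambda>\<omega>. h (T \<omega>))"
    and level: "\<And>n. (\<integral>\<omega>\<in>{\<omega>\<in>space M. T \<omega> = n}. X \<omega> \<partial>M) = h n * prob {\<omega>\<in>space M. T \<omega> = n}"
  shows "AE \<omega> in M. real_cond_exp M (vimage_algebra (space M) T (count_space UNIV)) X \<omega> = h (T \<omega>)"
proof -
  define F where "F = vimage_algebra (space M) T (count_space UNIV)"
  have sets_F: "sets F = {T -` B \<inter> space M | B. B \<subseteq> UNIV}"
    unfolding F_def by (subst sets_vimage_algebra2) auto
  have "subalgebra M F"
    unfolding F_def by (rule subalgebra_vimage_algebra[OF T])
  then interpret finite_measure_subalgebra M F
    by unfold_locales
  have level_h: "(\<integral>\<omega>\<in>{\<omega>\<in>space M. T \<omega> = n}. h (T \<omega>) \<partial>M) = h n * prob {\<omega>\<in>space M. T \<omega> = n}" for n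
  proof -
    have "(\<integral>\<omega>\<in>{\<omega>\<in>space M. T \<omega> = n}. h (T \<omega>) \<partial>M) = (\<integral>\<omega>\<in>{\<omega>\<in>space M. T \<omega> = n}. h n \<partial>M)"
      by (rule set_lebesgue_integral_cong) auto
    also have "\<dots> = h n * prob {\<omega>\<in>space M. T \<omega> = n}"
      by (simp add: set_integral_const)
    finally show ?thesis .
  qed
  have "AE \<omega> in M. real_cond_exp M F X \<omega> = h (T \<omega>)"
  proof (rule real_cond_exp_charact)
    fix E assume "E \<in> sets F"
    then obtain B where E: "E = T -` B \<inter> space M" by (auto simp: sets_F)
    define A where "A n = (if n \<in> B then {\<omega>\<in>space M. T \<omega> = n} else {})" for n
    have A_sets: "A n \<in> sets M" for n by (simp add: A_def)
    have A_disj: "i \<noteq> j \<Longrightarrow> A i \<inter> A j = {}" for i j by (auto simp: A_def)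
    have A_UN: "(\<Union>n. A n) = E" by (auto simp: A_def E split: if_splits)
    have E_sets: "E \<in> sets M" unfolding E by measurable
    have piece: "(\<integral>\<omega>\<in>A n. X \<omega> \<partial>M) = (\<integral>\<omega>\<in>A n. h (T \<omega>) \<partial>M)" for n
      by (cases "n \<in> B") (simp_all add: A_def level level_h set_lebesgue_integral_def[of _ "{}"])
    have int_X: "set_integrable M (\<Union>n. A n) X"
      and int_hT: "set_integrable M (\<Union>n. A n) (\<lambda>\<omega>. h (T \<omega>))"
      unfolding A_UN set_integrable_def using E_sets X hT
      by (simp_all add: integrable_real_mult_indicator mult.commute[of "indicator E _"])
    have "(\<integral>\<omega>\<in>E. X \<omega> \<partial>M) = (\<Sum>n. \<integral>\<omega>\<in>A n. X \<omega> \<partial>M)"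
      unfolding A_UN[symmetric] using A_sets A_disj int_X by (rule lebesgue_integral_countable_add)
    also have "\<dots> = (\<Sum>n. \<integral>\<omega>\<in>A n. h (T \<omega>) \<partial>M)" by (simp add: piece)
    also have "\<dots> = (\<integral>\<omega>\<in>E. h (T \<omega>) \<partial>M)"
      unfolding A_UN[symmetric] using A_sets A_disj int_hT by (rule lebesgue_integral_countable_add[symmetric])
    finally show "(\<integral>\<omega>\<in>E. X \<omega> \<partial>M) = (\<integral>\<omega>\<in>E. h (T \<omega>) \<partial>M)" .
  next
    have "T \<in> measurable F (count_space UNIV)"
      unfolding F_def by (rule measurable_vimage_algebra1) auto
    then show "(\<lambda>\<omega>. h (T \<omega>)) \<in> borel_measurable F" by measurable
  qed (use X hT in auto)
  then show ?thesis by (simp add: F_def)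
qed

lemma (in prob_space) variance_le_second_moment:
  fixes X :: "'a \<Rightarrow> real"
  assumes "integrable M X" "integrable M (\<lambda>\<omega>. (X \<omega>)\<^sup>2)"
  shows "variance X \<le> expectation (\<lambda>\<omega>. (X \<omega>)\<^sup>2)"
  using variance_eq[OF assms] by simp

lemma variance_of_cong_AE:
  fixes X Y :: "'a \<Rightarrow> real"
  assumes "AE \<omega> in M. X \<omega> = Y \<omega>" "X \<in> borel_measurable M" "Y \<in> borel_measurable M"
  shows "variance_of M X = variance_of M Y"
proof -
  have mean: "(\<integral>\<omega>. X \<omega> \<partial>M) = (\<integral>\<omega>. Y \<omega> \<partial>M)"
    using assms(2,3,1) by (rule integral_cong_AE)
  have "AE \<omega> in M. (X \<omega> - (\<integral>\<omega>. X \<omega> \<partial>M))\<^sup>2 = (Y \<omega> - (\<integral>\<omega>. Y \<omega> \<partial>M))\<^sup>2"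
    using assms(1) by eventually_elim (simp add: mean)
  then show ?thesis
    unfolding variance_of_def using assms(2,3) by (intro integral_cong_AE) auto
qed

lemma (in prob_space) integrable_shifted_square:
  fixes X :: "'a \<Rightarrow> real"
  assumes "integrable M X" "integrable M (\<lambda>\<omega>. (X \<omega>)\<^sup>2)"
  shows "integrable M (\<lambda>\<omega>. (X \<omega> - c)\<^sup>2)"
  using assms by (simp add: power2_diff)

text \<open>\<open>Var(X - Y) \<le> 2 Var X + 2 Var Y\<close>, from \<open>(u - v)\<^sup>2 \<le> 2u\<^sup>2 + 2v\<^sup>2\<close>.\<close>
lemma (in prob_space) variance_diff_le:
  fixes X Y :: "'a \<Rightarrow> real"
  assumes X: "integrable M X" "integrable M (\<lambda>\<omega>. (X \<omega>)\<^sup>2)"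
    and Y: "integrable M Y" "integrable M (\<lambda>\<omega>. (Y \<omega>)\<^sup>2)"
  shows "variance (\<lambda>\<omega>. X \<omega> - Y \<omega>) \<le> 2 * variance X + 2 * variance Y"
proof -
  let ?a = "expectation X" and ?b = "expectation Y"
  have int_X: "integrable M (\<lambda>\<omega>. (X \<omega> - ?a)\<^sup>2)" and int_Y: "integrable M (\<lambda>\<omega>. (Y \<omega> - ?b)\<^sup>2)"
    using integrable_shifted_square X Y by blast+
  have pointwise: "(X \<omega> - Y \<omega> - (?a - ?b))\<^sup>2 \<le> 2 * (X \<omega> - ?a)\<^sup>2 + 2 * (Y \<omega> - ?b)\<^sup>2" for \<omega>
    using sum_squares_ge_zero[of "X \<omega> - ?a + (Y \<omega> - ?b)" 0]
    by (simp add: power2_eq_square algebra_simps)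
  have "variance (\<lambda>\<omega>. X \<omega> - Y \<omega>) = expectation (\<lambda>\<omega>. (X \<omega> - Y \<omega> - (?a - ?b))\<^sup>2)"
    using X Y by simp
  also have "\<dots> \<le> expectation (\<lambda>\<omega>. 2 * (X \<omega> - ?a)\<^sup>2 + 2 * (Y \<omega> - ?b)\<^sup>2)"
  proof (rule integral_mono[OF _ _ pointwise])
    show "integrable M (\<lambda>\<omega>. 2 * (X \<omega> - ?a)\<^sup>2 + 2 * (Y \<omega> - ?b)\<^sup>2)"
      using int_X int_Y by simp
    moreover have "(\<lambda>\<omega>. (X \<omega> - Y \<omega> - (?a - ?b))\<^sup>2) \<in> borel_measurable M"
      using X(1) Y(1) by measurable
    ultimately show "integrable M (\<lambda>\<omega>. (X \<omega> - Y \<omega> - (?a - ?b))\<^sup>2)"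
      by (rule Bochner_Integration.integrable_bound) (use pointwise in auto)
  qed
  also have "\<dots> = 2 * variance X + 2 * variance Y"
    using int_X int_Y by simp
  finally show ?thesis .
qed

lemma (in prob_space) variance_sum_indep:
  fixes X :: "'i \<Rightarrow> 'a \<Rightarrow> real"
  assumes J: "finite J"
    and int: "\<And>j. j \<in> J \<Longrightarrow> integrable M (X j)"
    and int_sq: "\<And>j. j \<in> J \<Longrightarrow> integrable M (\<lambda>\<omega>. (X j \<omega>)\<^sup>2)"
    and ind: "\<And>i j. i \<in> J \<Longrightarrow> j \<in> J \<Longrightarrow> i \<noteq> j \<Longrightarrow> indep_var borel (X i) borel (X j)"
  shows "integrable M (\<lambda>\<omega>. (\<Sum>j\<in>J. X j \<omega>)\<^sup>2)"
    and "variance (\<lambda>\<omega>. \<Sum>j\<in>J. X j \<omega>) = (\<Sum>j\<in>J. variance (X j))"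
proof -
  have products: "integrable M (\<lambda>\<omega>. (X i \<omega> - c) * (X j \<omega> - d))
      \<and> expectation (\<lambda>\<omega>. (X i \<omega> - c) * (X j \<omega> - d))
          = (if i = j then expectation (\<lambda>\<omega>. (X i \<omega> - c) * (X i \<omega> - d))
             else (expectation (X i) - c) * (expectation (X j) - d))"
    if "i \<in> J" "j \<in> J" for i j c d
  proof (cases "i = j")
    case True
    then show ?thesis using int[OF \<open>i \<in> J\<close>] int_sq[OF \<open>i \<in> J\<close>]
      by (simp add: algebra_simps power2_eq_square)
  next
    case False
    have "indep_var borel ((\<lambda>x. x - c) \<circ> X i) borel ((\<lambda>x. x - d) \<circ> X j)"
      by (rule indep_var_compose[OF ind[OF that False]]) auto
    then have ind': "indep_var borel (\<lambda>\<omega>. X i \<omega> - c) borel (\<lambda>\<omega>. X j \<omega> - d)"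
      by (simp add: comp_def)
    have "integrable M (\<lambda>\<omega>. X i \<omega> - c)" "integrable M (\<lambda>\<omega>. X j \<omega> - d)"
      using int that by auto
    from indep_var_integrable[OF ind' this] indep_var_lebesgue_integral[OF ind' this]
    show ?thesis using False int that by (simp add: prob_space)
  qed
  have square_sum: "(\<Sum>j\<in>J. X j \<omega> - c j)\<^sup>2 = (\<Sum>i\<in>J. \<Sum>j\<in>J. (X i \<omega> - c i) * (X j \<omega> - c j))"
    for \<omega> c by (simp add: power2_eq_square sum_product)
  show "integrable M (\<lambda>\<omega>. (\<Sum>j\<in>J. X j \<omega>)\<^sup>2)"
    using square_sum[of _ "\<lambda>_. 0"] products[of _ _ 0 0]
    by simp
  let ?m = "\<lambda>j. expectation (X j)"
  let ?Z = "\<lambda>i j \<omega>. (X i \<omega> - ?m i) * (X j \<omega> - ?m j)"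
  have int_Z: "integrable M (?Z i j)" if "i \<in> J" "j \<in> J" for i j
    using products[OF that] by blast
  have E_Z: "expectation (?Z i j) = (if i = j then variance (X i) else 0)"
    if "i \<in> J" "j \<in> J" for i j
    using products[OF that, of "?m i" "?m j"] by (simp add: power2_eq_square)
  have mean: "expectation (\<lambda>\<omega>. \<Sum>j\<in>J. X j \<omega>) = (\<Sum>j\<in>J. ?m j)"
    using int by simp
  have "variance (\<lambda>\<omega>. \<Sum>j\<in>J. X j \<omega>) = expectation (\<lambda>\<omega>. (\<Sum>j\<in>J. X j \<omega> - ?m j)\<^sup>2)"
    by (simp only: mean sum_subtractf)
  also have "\<dots> = expectation (\<lambda>\<omega>. \<Sum>i\<in>J. \<Sum>j\<in>J. ?Z i j \<omega>)"
    by (simp only: square_sum)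
  also have "\<dots> = (\<Sum>i\<in>J. \<Sum>j\<in>J. expectation (?Z i j))"
    using int_Z by (simp add: Bochner_Integration.integrable_sum)
  also have "\<dots> = (\<Sum>i\<in>J. \<Sum>j\<in>J. if i = j then variance (X i) else 0)"
    using E_Z by simp
  also have "\<dots> = (\<Sum>j\<in>J. variance (X j))"
    using J by simp
  finally show "variance (\<lambda>\<omega>. \<Sum>j\<in>J. X j \<omega>) = (\<Sum>j\<in>J. variance (X j))" .
qed

lemma (in prob_space) variance_indep_sum_minus_le:
  fixes X :: "'i \<Rightarrow> 'a \<Rightarrow> real" and Y :: "'a \<Rightarrow> real"
  assumes J: "finite J"
    and int: "\<And>j. j \<in> J \<Longrightarrow> integrable M (X j)"
    and int_sq: "\<And>j. j \<in> J \<Longrightarrow> integrable M (\<lambda>\<omega>. (X j \<omega>)\<^sup>2)"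
    and ind: "\<And>i j. i \<in> J \<Longrightarrow> j \<in> J \<Longrightarrow> i \<noteq> j \<Longrightarrow> indep_var borel (X i) borel (X j)"
    and var: "\<And>j. j \<in> J \<Longrightarrow> variance (X j) \<le> C"
    and Y: "integrable M Y" "integrable M (\<lambda>\<omega>. (Y \<omega>)\<^sup>2)" "variance Y \<le> C"
  shows "variance (\<lambda>\<omega>. (\<Sum>j\<in>J. X j \<omega>) - Y \<omega>) \<le> 2 * C * real (card J) + 2 * C"
proof -
  have "variance (\<lambda>\<omega>. (\<Sum>j\<in>J. X j \<omega>) - Y \<omega>) \<le> 2 * variance (\<lambda>\<omega>. \<Sum>j\<in>J. X j \<omega>) + 2 * variance Y"
    using variance_sum_indep(1)[OF J int int_sq ind] Y int
    by (intro variance_diff_le) auto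
  also have "\<dots> = 2 * (\<Sum>j\<in>J. variance (X j)) + 2 * variance Y"
    using variance_sum_indep(2)[OF J int int_sq ind] by simp
  also have "\<dots> \<le> 2 * (\<Sum>j\<in>J. C) + 2 * C"
    using var Y(3) by (intro add_mono mult_left_mono sum_mono) auto
  finally show ?thesis
    by (simp add: mult_ac)
qed

lemma (in prob_space) moment_indep_add:
  fixes S Y :: "'a \<Rightarrow> real"
  assumes ind: "indep_var borel S borel Y"
    and int_S: "\<And>k. k \<le> n \<Longrightarrow> integrable M (\<lambda>\<omega>. S \<omega> ^ k)"
    and int_Y: "\<And>k. k \<le> n \<Longrightarrow> integrable M (\<lambda>\<omega>. Y \<omega> ^ k)"
  shows "integrable M (\<lambda>\<omega>. (S \<omega> + Y \<omega>) ^ n)"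
    and "expectation (\<lambda>\<omega>. (S \<omega> + Y \<omega>) ^ n)
           = (\<Sum>k\<le>n. of_nat (n choose k) * expectation (\<lambda>\<omega>. S \<omega> ^ k) * expectation (\<lambda>\<omega>. Y \<omega> ^ (n - k)))"
proof -
  have binomial: "(S \<omega> + Y \<omega>) ^ n = (\<Sum>k\<le>n. of_nat (n choose k) * (S \<omega> ^ k * Y \<omega> ^ (n - k)))" for \<omega>
    by (simp add: binomial_ring mult.assoc)
  have int_term: "integrable M (\<lambda>\<omega>. S \<omega> ^ k * Y \<omega> ^ (n - k))"
    and E_term: "expectation (\<lambda>\<omega>. S \<omega> ^ k * Y \<omega> ^ (n - k))
                   = expectation (\<lambda>\<omega>. S \<omega> ^ k) * expectation (\<lambda>\<omega>. Y \<omega> ^ (n - k))"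
    if "k \<le> n" for k
  proof -
    have "indep_var borel ((\<lambda>x. x ^ k) \<circ> S) borel ((\<lambda>x. x ^ (n - k)) \<circ> Y)"
      by (rule indep_var_compose[OF ind]) auto
    then have ind_pow: "indep_var borel (\<lambda>\<omega>. S \<omega> ^ k) borel (\<lambda>\<omega>. Y \<omega> ^ (n - k))"
      by (simp add: comp_def)
    have "integrable M (\<lambda>\<omega>. S \<omega> ^ k)" "integrable M (\<lambda>\<omega>. Y \<omega> ^ (n - k))"
      using int_S int_Y that by auto
    from indep_var_integrable[OF ind_pow this] indep_var_lebesgue_integral[OF ind_pow this]
    show "integrable M (\<lambda>\<omega>. S \<omega> ^ k * Y \<omega> ^ (n - k))"
      and "expectation (\<lambda>\<omega>. S \<omega> ^ k * Y \<omega> ^ (n - k))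
             = expectation (\<lambda>\<omega>. S \<omega> ^ k) * expectation (\<lambda>\<omega>. Y \<omega> ^ (n - k))" by auto
  qed
  show "integrable M (\<lambda>\<omega>. (S \<omega> + Y \<omega>) ^ n)"
    unfolding binomial using int_term
    by (intro Bochner_Integration.integrable_sum integrable_mult_right) auto
  show "expectation (\<lambda>\<omega>. (S \<omega> + Y \<omega>) ^ n)
           = (\<Sum>k\<le>n. of_nat (n choose k) * expectation (\<lambda>\<omega>. S \<omega> ^ k) * expectation (\<lambda>\<omega>. Y \<omega> ^ (n - k)))"
    unfolding binomial using int_term E_term
    by (subst Bochner_Integration.integral_sum) (auto simp: mult.assoc)
qed

lemma (in prob_space) moments_indep_sum:
  fixes Y :: "'i \<Rightarrow> 'a \<Rightarrow> real" and \<sigma>\<^sub>2 \<mu>\<^sub>4 :: real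
  assumes ind: "indep_vars (\<lambda>_. borel) Y I" and A: "finite A" "A \<subseteq> I"
    and int: "\<And>i k. i \<in> I \<Longrightarrow> k \<le> 4 \<Longrightarrow> integrable M (\<lambda>\<omega>. Y i \<omega> ^ k)"
    and mean: "\<And>i. i \<in> I \<Longrightarrow> expectation (Y i) = 0"
    and second: "\<And>i. i \<in> I \<Longrightarrow> expectation (\<lambda>\<omega>. Y i \<omega> ^ 2) = \<sigma>\<^sub>2"
    and fourth: "\<And>i. i \<in> I \<Longrightarrow> expectation (\<lambda>\<omega>. Y i \<omega> ^ 4) = \<mu>\<^sub>4"
  shows "(\<forall>k\<le>4. integrable M (\<lambda>\<omega>. (\<Sum>i\<in>A. Y i \<omega>) ^ k))
    \<and> expectation (\<lambda>\<omega>. \<Sum>i\<in>A. Y i \<omega>) = 0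
    \<and> expectation (\<lambda>\<omega>. (\<Sum>i\<in>A. Y i \<omega>) ^ 2) = card A * \<sigma>\<^sub>2
    \<and> expectation (\<lambda>\<omega>. (\<Sum>i\<in>A. Y i \<omega>) ^ 4)
          = real (card A) * \<mu>\<^sub>4 + 3 * real (card A) * (real (card A) - 1) * \<sigma>\<^sub>2\<^sup>2"
  using A
proof (induction A rule: finite_induct)
  case empty
  then show ?case by (simp add: prob_space)
next
  case (insert y A)
  let ?S = "\<lambda>\<omega>. \<Sum>i\<in>A. Y i \<omega>" and ?n = "real (card A)"
  have y: "y \<in> I" and IH: "(\<forall>k\<le>4. integrable M (\<lambda>\<omega>. ?S \<omega> ^ k))"
      "expectation ?S = 0" "expectation (\<lambda>\<omega>. ?S \<omega> ^ 2) = ?n * \<sigma>\<^sub>2"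
      "expectation (\<lambda>\<omega>. ?S \<omega> ^ 4) = ?n * \<mu>\<^sub>4 + 3 * ?n * (?n - 1) * \<sigma>\<^sub>2\<^sup>2"
    using insert by auto
  have ind_yA: "indep_var borel (Y y) borel ?S"
    using insert by (intro indep_vars_sum indep_vars_subset[OF ind]) auto
  have int_y: "k \<le> 4 \<Longrightarrow> integrable M (\<lambda>\<omega>. Y y \<omega> ^ k)" for k
    using int[OF y] .
  have expand: "integrable M (\<lambda>\<omega>. (Y y \<omega> + ?S \<omega>) ^ k)"
    "expectation (\<lambda>\<omega>. (Y y \<omega> + ?S \<omega>) ^ k) = (\<Sum>j\<le>k. of_nat (k choose j)
        * expectation (\<lambda>\<omega>. Y y \<omega> ^ j) * expectation (\<lambda>\<omega>. ?S \<omega> ^ (k - j)))"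
    if "k \<le> 4" for k
    using moment_indep_add[OF ind_yA, of k] int_y IH(1) that by auto
  have sum_insert: "(\<Sum>i\<in>insert y A. Y i \<omega>) = Y y \<omega> + ?S \<omega>" for \<omega>
    using insert by simp
  have card: "real (card (insert y A)) = ?n + 1"
    using insert by simp
  have E_y: "expectation (Y y) = 0" "expectation (\<lambda>\<omega>. Y y \<omega> ^ 2) = \<sigma>\<^sub>2"
    "expectation (\<lambda>\<omega>. Y y \<omega> ^ 4) = \<mu>\<^sub>4"
    using mean second fourth y by auto
  have binom: "(4::nat) choose 1 = 4" "(4::nat) choose 2 = 6" "(4::nat) choose 3 = 4" "(2::nat) choose 1 = 2"
    by (simp_all add: numeral_eq_Suc)
  have "expectation (\<lambda>\<omega>. (Y y \<omega> + ?S \<omega>) ^ 4)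
      = expectation (\<lambda>\<omega>. ?S \<omega> ^ 4) + 6 * \<sigma>\<^sub>2 * expectation (\<lambda>\<omega>. ?S \<omega> ^ 2) + \<mu>\<^sub>4"
    using expand(2)[of 4] E_y IH(2) by (simp add: numeral_eq_Suc binom prob_space)
  also have "\<dots> = (?n + 1) * \<mu>\<^sub>4 + 3 * (?n + 1) * ?n * \<sigma>\<^sub>2\<^sup>2"
    using IH(3,4) by (simp add: power2_eq_square algebra_simps)
  finally have fourth_moment: "expectation (\<lambda>\<omega>. (Y y \<omega> + ?S \<omega>) ^ 4)
      = (?n + 1) * \<mu>\<^sub>4 + 3 * (?n + 1) * ?n * \<sigma>\<^sub>2\<^sup>2" .
  have "expectation (\<lambda>\<omega>. Y y \<omega> + ?S \<omega>) = 0"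
    using expand(2)[of 1] E_y IH(2) by (simp add: prob_space)
  moreover have "expectation (\<lambda>\<omega>. (Y y \<omega> + ?S \<omega>) ^ 2) = (?n + 1) * \<sigma>\<^sub>2"
    using expand(2)[of 2] E_y IH(2,3) by (simp add: numeral_eq_Suc binom prob_space algebra_simps)
  ultimately show ?case
    using expand(1) fourth_moment by (simp add: sum_insert card)
qed

section \<open>Geometric and negative binomial distributions\<close>

text \<open>A polynomial times a geometric sequence is summable (induction on the degree, by
  termwise differentiation of power series).\<close>
lemma summable_power_times_geometric:
  fixes z :: real
  assumes "\<bar>z\<bar> < 1"
  shows "summable (\<lambda>n. real n ^ k * z ^ n)"
  using assms
proof (induction k arbitrary: z)
  case 0
  then show ?case by (simp add: summable_geometric)
next
  case (Suc k)
  have "summable (\<lambda>n. diffs (\<lambda>n. real n ^ k) n * z ^ n)"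
    by (rule termdiff_converges[where K=1]) (use Suc in auto)
  then have "summable (\<lambda>n. real (Suc n) ^ Suc k * z ^ n)"
    by (simp add: diffs_def)
  then show ?case
    using summable_powser_split_head[of "\<lambda>n. real n ^ Suc k" z] by simp
qed

lemma integrable_geometric_pmf_power:
  assumes "p \<in> {0<..1}"
  shows "integrable (measure_pmf (geometric_pmf p)) (\<lambda>n. real n ^ k)"
proof -
  have "summable (\<lambda>n. real n ^ k * (1 - p) ^ n)"
    using assms by (intro summable_power_times_geometric) auto
  then have "summable (\<lambda>n. p * (real n ^ k * (1 - p) ^ n))"
    by (rule summable_mult)
  then show ?thesis
    unfolding measure_pmf_eq_density using assms
    by (subst integrable_density) (auto simp: integrable_count_space_nat_iff mult_ac)
qed

lemma integrable_geometric_pmf_shifted_power: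
  assumes "p \<in> {0<..1}"
  shows "integrable (measure_pmf (geometric_pmf p)) (\<lambda>n. (real n - c) ^ k)"
proof -
  have "(real n - c) ^ k = (\<Sum>i\<le>k. of_nat (k choose i) * real n ^ i * (- c) ^ (k - i))" for n
    using binomial_ring[of "real n" "- c" k] by simp
  then show ?thesis
    using integrable_geometric_pmf_power[OF assms]
    by simp
qed

lemma neg_binomial_pmf_convolution:
  assumes p: "p \<in> {0<..1}"
  shows "(\<Sum>k\<le>n. pmf (neg_binomial_pmf K p) k * pmf (geometric_pmf p) (n - k))
           = pmf (neg_binomial_pmf (Suc K) p) n"
proof -
  have "(\<Sum>k\<le>n. pmf (neg_binomial_pmf K p) k * pmf (geometric_pmf p) (n - k))
      = (\<Sum>k\<le>n. real ((k + K - 1) choose k)) * p ^ Suc K * (1 - p) ^ n"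
    unfolding sum_distrib_right pmf_neg_binomial[OF p]
  proof (rule sum.cong[OF refl])
    fix k assume "k \<in> {..n}"
    then have "(1 - p) ^ k * (1 - p) ^ (n - k) = (1 - p) ^ n"
      by (simp add: power_add[symmetric])
    then show "real ((k + K - 1) choose k) * p ^ K * (1 - p) ^ k * pmf (geometric_pmf p) (n - k)
        = real ((k + K - 1) choose k) * p ^ Suc K * (1 - p) ^ n"
      using p by (simp add: algebra_simps)
  qed
  also have "(\<Sum>k\<le>n. real ((k + K - 1) choose k)) = real ((n + K) choose n)"
  proof (cases K)
    case 0
    then have "(\<Sum>k\<le>n. real ((k + K - 1) choose k)) = (\<Sum>k\<in>{0}. real ((k + K - 1) choose k))"
      by (intro sum.mono_neutral_right) auto
    then show ?thesis by (simp add: 0)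
  next
    case (Suc r)
    have "real (\<Sum>k\<le>n. (r + k) choose k) = real (Suc (r + n) choose n)"
      by (simp only: sum_choose_lower)
    then show ?thesis by (simp add: Suc add.commute)
  qed
  finally show ?thesis by (simp add: pmf_neg_binomial[OF p])
qed

text \<open>Pascal's rule in negative binomial form; it computes the probability that a fixed site of
  a block is empty given the block sum.\<close>
lemma neg_binomial_pmf_pascal:
  assumes p: "p \<in> {0<..1}"
  shows "pmf (neg_binomial_pmf (Suc r) p) n - pmf (neg_binomial_pmf r p) n * p
           = pmf (neg_binomial_pmf (Suc r) p) n * (real n / (real n + real r))"
proof (cases n)
  case 0
  then show ?thesis by (simp add: pmf_neg_binomial[OF p])
next
  case (Suc m)
  have pascal: "Suc (m + r) choose Suc m = (m + r choose m) + (m + r choose Suc m)"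
    by simp
  have "real (Suc (m + r)) * real (m + r choose m) = real (Suc (m + r) choose Suc m) * real (Suc m)"
    by (metis of_nat_mult Suc_times_binomial_eq)
  then have absorb: "real (m + r choose m) = real (Suc (m + r) choose Suc m) * (real (Suc m) / real (Suc (m + r)))"
    by (simp add: field_simps)
  have "pmf (neg_binomial_pmf (Suc r) p) n - pmf (neg_binomial_pmf r p) n * p
      = real (m + r choose m) * p ^ Suc r * (1 - p) ^ n"
    unfolding pmf_neg_binomial[OF p] Suc using pascal by (simp add: algebra_simps)
  also have "\<dots> = pmf (neg_binomial_pmf (Suc r) p) n * (real n / (real n + real r))"
    unfolding pmf_neg_binomial[OF p] Suc absorb by (simp add: field_simps del: binomial_Suc_Suc)
  finally show ?thesis .
qed

section \<open>The block profile and its pointwise bound\<close>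

text \<open>\<open>occupation_mean K n = K n / (n + K - 1)\<close> is the conditional expected number of occupied
  sites of a block of \<open>K\<close> sites carrying \<open>n\<close> particles; \<open>block_profile \<rho> K n\<close> is the resulting
  conditional expectation of \<open>\<Sum> V\<^sub>g\<close> over the block.\<close>
definition occupation_mean :: "nat \<Rightarrow> nat \<Rightarrow> real" where
  "occupation_mean K n = real K * real n / (real n + real K - 1)"

definition block_profile :: "real \<Rightarrow> nat \<Rightarrow> nat \<Rightarrow> real" where
  "block_profile \<rho> K n = occupation_mean K n - real K * phi \<rho> - deriv phi \<rho> * (real n - real K * \<rho>)"

lemma occupation_mean_bounds: "0 \<le> occupation_mean K n" "occupation_mean K n \<le> real K"
proof -
  show "0 \<le> occupation_mean K n"
    by (cases "n + K = 0") (auto simp: occupation_mean_def)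
  show "occupation_mean K n \<le> real K"
  proof (cases "n = 0 \<or> K = 0")
    case True
    then show ?thesis by (auto simp: occupation_mean_def)
  next
    case False
    then obtain m where "n = Suc m" "K \<ge> 1"
      by (cases n) auto
    then have "real n / (real n + real K - 1) \<le> 1"
      by simp
    then have "real K * (real n / (real n + real K - 1)) \<le> real K * 1"
      by (intro mult_left_mono) auto
    then show ?thesis
      by (simp add: occupation_mean_def)
  qed
qed

lemma deriv_phi:
  assumes "1 + \<rho> \<noteq> 0"
  shows "deriv phi \<rho> = 1 / (1 + \<rho>)\<^sup>2"
proof -
  have "(phi has_real_derivative ((1 * (1 + \<rho>) - \<rho> * 1) / (1 + \<rho>)\<^sup>2)) (at \<rho>)"
    unfolding phi_def[abs_def] using assms
    by (auto intro!: derivative_eq_intros simp: power2_eq_square)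
  then show ?thesis
    by (intro DERIV_imp_deriv) simp
qed

text \<open>The block profile is the difference of a term in \<open>[0, 1]\<close> and a nonnegative term
  of size at most \<open>(n - K\<rho>)\<^sup>2 / K\<close>: the linear parts cancel exactly.\<close>
lemma block_profile_split:
  assumes "K \<ge> 1" "\<rho> \<ge> 0"
  shows "block_profile \<rho> K n
     = (occupation_mean K n - real K * real n / (real n + real K))
       - (real n - real K * \<rho>)\<^sup>2 / ((real n + real K) * (1 + \<rho>)\<^sup>2)"
proof -
  have pos: "real n + real K > 0" "1 + \<rho> > 0"
    using assms by auto
  let ?T = "real n - real K * \<rho>" and ?D = "(real n + real K) * (1 + \<rho>)\<^sup>2"
  have lhs: "real K * real n / (real n + real K) + ?T\<^sup>2 / ?D = (real K * real n * (1 + \<rho>)\<^sup>2 + ?T\<^sup>2) / ?D"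
    using pos by (simp add: add_divide_distrib)
  have rhs: "real K * \<rho> / (1 + \<rho>) + ?T / (1 + \<rho>)\<^sup>2
      = (real K * \<rho> * (1 + \<rho>) * (real n + real K) + ?T * (real n + real K)) / ?D"
    using pos by (simp add: add_divide_distrib power2_eq_square)
  have "real K * real n * (1 + \<rho>)\<^sup>2 + ?T\<^sup>2 = real K * \<rho> * (1 + \<rho>) * (real n + real K) + ?T * (real n + real K)"
    by (simp add: power2_eq_square algebra_simps)
  then have "real K * real n / (real n + real K) + ?T\<^sup>2 / ?D = real K * \<rho> / (1 + \<rho>) + ?T / (1 + \<rho>)\<^sup>2"
    unfolding lhs rhs by simp
  then show ?thesis
    using pos by (simp add: block_profile_def deriv_phi phi_def)
qed

lemma block_profile_square_le:
  assumes K: "K \<ge> 1" and \<rho>: "\<rho> \<ge> 0"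
  shows "(block_profile \<rho> K n)\<^sup>2 \<le> 2 + 2 * (real n - real K * \<rho>) ^ 4 / (real K)\<^sup>2"
proof -
  define u where "u = occupation_mean K n - real K * real n / (real n + real K)"
  define v where "v = (real n - real K * \<rho>)\<^sup>2 / ((real n + real K) * (1 + \<rho>)\<^sup>2)"
  define Q where "Q = (real n - real K * \<rho>)\<^sup>2 / real K"
  have u: "0 \<le> u \<and> u \<le> 1"
  proof (cases n)
    case 0
    then show ?thesis by (simp add: u_def occupation_mean_def)
  next
    case (Suc m)
    then have pos: "real n + real K - 1 > 0" "real n + real K > 0"
      using K by auto
    have "u = real K * real n / ((real n + real K - 1) * (real n + real K))"
      unfolding u_def occupation_mean_def using pos by (simp add: field_simps)
    moreover have "real K * real n \<le> (real n + real K) * (real n + real K - 1)"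
      using mult_mono[of "real K" "real n + real K" "real n" "real n + real K - 1"] K by simp
    ultimately show ?thesis
      using pos by (simp add: divide_le_eq_1 mult.commute)
  qed
  have v: "0 \<le> v \<and> v \<le> Q"
  proof -
    have "(1 + \<rho>)\<^sup>2 \<ge> 1"
      using \<rho> by (simp add: one_le_power)
    then have "real K \<le> (real n + real K) * (1 + \<rho>)\<^sup>2"
      using mult_mono[of "real K" "real n + real K" 1 "(1 + \<rho>)\<^sup>2"] by simp
    then show ?thesis
      unfolding v_def Q_def using K by (auto intro: divide_left_mono)
  qed
  have "(block_profile \<rho> K n)\<^sup>2 = (u - v)\<^sup>2"
    using block_profile_split[OF K \<rho>] by (simp add: u_def v_def)
  also have "\<dots> \<le> (1 + Q)\<^sup>2"
    using u v by (subst abs_le_square_iff[symmetric]) auto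
  also have "\<dots> \<le> 2 + 2 * Q\<^sup>2"
    using sum_squares_ge_zero[of "Q - 1" 0] by (simp add: power2_eq_square algebra_simps)
  also have "Q\<^sup>2 = (real n - real K * \<rho>) ^ 4 / (real K)\<^sup>2"
    by (simp add: Q_def power_divide flip: power_mult)
  finally show ?thesis by simp
qed

section \<open>Blocks of consecutive sites\<close>

definition block :: "int \<Rightarrow> nat \<Rightarrow> nat \<Rightarrow> int set" where
  "block a K j = {a + int ((j - 1) * K) ..< a + int (j * K)}"

lemma card_block: "j \<ge> 1 \<Longrightarrow> card (block a K j) = K"
  by (simp add: block_def diff_mult_distrib of_nat_diff)

lemma blocks_disjoint:
  assumes "i \<ge> 1" "j \<ge> 1" "i \<noteq> j"
  shows "block a K i \<inter> block a K j = {}"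
proof -
  have before: "int (u * K) \<le> int ((v - 1) * K)" if "u < v" for u v :: nat
    using that by (simp add: mult_right_mono)
  show ?thesis
  proof (cases "i < j")
    case True
    then show ?thesis using before[OF True] unfolding block_def by auto
  next
    case False
    then have "j < i" using assms by simp
    then show ?thesis using before[OF \<open>j < i\<close>] unfolding block_def by auto
  qed
qed

lemma V2_blocks:
  "V2 \<rho> K L a = (\<lambda>\<eta>. (\<Sum>j\<in>{1..L}. cond_block \<rho> (block a K j) \<eta>)
                          - cond_block \<rho> {a ..< a + int (L * K)} \<eta>)"
  by (simp add: V2_def block_def fun_eq_iff)

section \<open>The geometric product measure\<close>

locale geometric_field =
  fixes \<rho> :: real
  assumes rho_pos: "\<rho> > 0"
begin

definition p :: real where "p = 1 / (1 + \<rho>)"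

lemma p_range: "p \<in> {0<..1}"
  using rho_pos by (simp add: p_def)

abbreviation G :: "nat measure" where "G \<equiv> measure_pmf (geometric_pmf p)"

lemma nu_eq: "nu \<rho> = PiM UNIV (\<lambda>_. G)"
  unfolding nu_def p_def ..

lemma prob_space_nu: "prob_space (nu \<rho>)"
  unfolding nu_eq by (intro prob_space_PiM measure_pmf.prob_space_axioms)

end


sublocale geometric_field \<subseteq> prob_space "nu \<rho>"
  by (rule prob_space_nu)

context geometric_field
begin

lemma space_nu [simp]: "space (nu \<rho>) = UNIV"
  by (simp add: nu_eq space_PiM)

lemma prob_UNIV [simp]: "prob UNIV = 1"
  using prob_space by simp

lemma coordinate_measurable [measurable]: "(\<lambda>\<eta>. \<eta> x) \<in> measurable (nu \<rho>) (count_space UNIV)"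
  unfolding nu_eq by measurable

lemma coordinate_distr: "distr (nu \<rho>) G (\<lambda>\<eta>. \<eta> x) = G"
proof -
  interpret product_prob_space "\<lambda>_. G" UNIV
    by unfold_locales
  show ?thesis
    unfolding nu_eq using PiM_component[of x] by simp
qed

lemma coordinates_indep: "indep_vars (\<lambda>_. count_space UNIV) (\<lambda>x \<eta>. \<eta> x) UNIV"
proof -
  have coord_G: "(\<lambda>\<eta>. \<eta> x) \<in> measurable (nu \<rho>) G" for x
    using coordinate_measurable by (simp add: measurable_cong_sets)
  have "distr (nu \<rho>) (PiM UNIV (\<lambda>_. G)) (\<lambda>\<eta>. \<lambda>x\<in>UNIV. \<eta> x)
      = PiM UNIV (\<lambda>x. distr (nu \<rho>) G (\<lambda>\<eta>. \<eta> x))"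
    by (simp add: coordinate_distr nu_eq[symmetric] restrict_UNIV)
  then have "indep_vars (\<lambda>_. G) (\<lambda>x \<eta>. \<eta> x) UNIV"
    by (subst indep_vars_iff_distr_eq_PiM) (auto simp: coord_G)
  then show ?thesis
    by (rule indep_vars_compose2[where Y="\<lambda>_ k. k", simplified]) simp
qed

lemma coordinate_integral:
  fixes h :: "nat \<Rightarrow> real"
  assumes "integrable G h"
  shows "integrable (nu \<rho>) (\<lambda>\<eta>. h (\<eta> x))" and "expectation (\<lambda>\<eta>. h (\<eta> x)) = (\<integral>k. h k \<partial>G)"
proof -
  have coord_G: "(\<lambda>\<eta>. \<eta> x) \<in> measurable (nu \<rho>) G"
    using coordinate_measurable by (simp add: measurable_cong_sets)
  show "integrable (nu \<rho>) (\<lambda>\<eta>. h (\<eta> x))"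
    using integrable_distr_eq[OF coord_G, of h] assms by (simp add: coordinate_distr)
  show "expectation (\<lambda>\<eta>. h (\<eta> x)) = (\<integral>k. h k \<partial>G)"
    using integral_distr[OF coord_G, of h] by (simp add: coordinate_distr)
qed

definition block_sum :: "int set \<Rightarrow> (int \<Rightarrow> nat) \<Rightarrow> nat" where
  "block_sum A \<eta> = (\<Sum>x\<in>A. \<eta> x)"

lemma block_sum_measurable [measurable]: "block_sum A \<in> measurable (nu \<rho>) (count_space UNIV)"
  unfolding block_sum_def by measurable

lemma block_sum_events [measurable]: "{\<eta>. block_sum A \<eta> = n} \<in> events"
  using measurable_sets[OF block_sum_measurable, of "{n}" A] by (simp add: vimage_def)

lemma block_sum_joint_events [measurable]:
  "{\<eta>. block_sum A \<eta> = i \<and> block_sum B \<eta> = j} \<in> events"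
  unfolding Collect_conj_eq by measurable

lemma blocks_indep:
  assumes "A \<inter> B = {}"
  shows "indep_var (count_space UNIV) (block_sum A) (count_space UNIV) (block_sum B)"
proof -
  have sum_measurable:
    "(\<lambda>\<phi>. \<Sum>x\<in>C. \<phi> x) \<in> measurable (PiM C (\<lambda>_. count_space UNIV)) (count_space (UNIV :: nat set))"
    for C :: "int set" by measurable
  show ?thesis
    using indep_var_blocks[OF coordinates_indep assms _ _ sum_measurable sum_measurable]
    by (simp add: block_sum_def[abs_def])
qed

lemma block_functions_indep:
  fixes f h :: "nat \<Rightarrow> real"
  assumes "A \<inter> B = {}"
  shows "indep_var borel (\<lambda>\<eta>. f (block_sum A \<eta>)) borel (\<lambda>\<eta>. h (block_sum B \<eta>))"
  using indep_var_compose[OF blocks_indep[OF assms], of f borel h] by (simp add: comp_def)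

lemma prob_coordinate: "prob {\<eta>. \<eta> x = k} = pmf (geometric_pmf p) k"
proof -
  have "(\<lambda>\<eta>. \<eta> x) \<in> measurable (nu \<rho>) G"
    using coordinate_measurable by (simp add: measurable_cong_sets)
  then have "prob {\<eta>. \<eta> x = k} = measure (distr (nu \<rho>) G (\<lambda>\<eta>. \<eta> x)) {k}"
    by (subst measure_distr) (auto simp: vimage_def)
  then show ?thesis
    by (simp add: coordinate_distr measure_pmf_single)
qed

lemma prob_blocks_joint:
  assumes "A \<inter> B = {}"
  shows "prob {\<eta>. block_sum A \<eta> = i \<and> block_sum B \<eta> = j}
           = prob {\<eta>. block_sum A \<eta> = i} * prob {\<eta>. block_sum B \<eta> = j}"
  using prob_indep_random_variable[OF blocks_indep[OF assms], of "{i}" "{j}"] by simp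

lemma block_sum_law:
  assumes "finite A"
  shows "prob {\<eta>. block_sum A \<eta> = n} = pmf (neg_binomial_pmf (card A) p) n"
  using assms
proof (induction A arbitrary: n rule: finite_induct)
  case empty
  show ?case by (simp add: block_sum_def)
next
  case (insert y A)
  have split: "{\<eta>. block_sum (insert y A) \<eta> = n}
      = (\<Union>k\<in>{..n}. {\<eta>. block_sum A \<eta> = k \<and> block_sum {y} \<eta> = n - k})"
    using insert by (auto simp: block_sum_def)
  have "prob {\<eta>. block_sum (insert y A) \<eta> = n}
      = (\<Sum>k\<le>n. prob {\<eta>. block_sum A \<eta> = k \<and> block_sum {y} \<eta> = n - k})"
    unfolding split
    by (rule finite_measure_finite_Union) (auto simp: disjoint_family_on_def)
  also have "\<dots> = (\<Sum>k\<le>n. pmf (neg_binomial_pmf (card A) p) k * pmf (geometric_pmf p) (n - k))"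
  proof (rule sum.cong[OF refl])
    fix k
    have "A \<inter> {y} = {}" "{\<eta>. block_sum {y} \<eta> = n - k} = {\<eta>. \<eta> y = n - k}"
      using insert by (auto simp: block_sum_def)
    then show "prob {\<eta>. block_sum A \<eta> = k \<and> block_sum {y} \<eta> = n - k}
        = pmf (neg_binomial_pmf (card A) p) k * pmf (geometric_pmf p) (n - k)"
      by (simp add: prob_blocks_joint insert.IH prob_coordinate)
  qed
  also have "\<dots> = pmf (neg_binomial_pmf (card (insert y A)) p) n"
    using insert by (simp add: neg_binomial_pmf_convolution[OF p_range])
  finally show ?case .
qed

lemma block_sum_remove: "x \<in> A \<Longrightarrow> finite A \<Longrightarrow> block_sum A \<eta> = \<eta> x + block_sum (A - {x}) \<eta>"
  by (simp add: block_sum_def sum.remove)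

lemma occupied_site_law:
  assumes A: "finite A" "x \<in> A"
  shows "prob {\<eta>. block_sum A \<eta> = n \<and> \<eta> x \<ge> 1}
           = pmf (neg_binomial_pmf (card A) p) n * (real n / (real n + real (card A) - 1))"
proof -
  obtain r where r: "card A = Suc r" "card (A - {x}) = r"
    using A by (cases "card A") auto
  have empty_site: "{\<eta>. block_sum (A - {x}) \<eta> = n \<and> block_sum {x} \<eta> = 0}
      = {\<eta>. block_sum A \<eta> = n \<and> \<not> \<eta> x \<ge> 1}"
  proof -
    have "block_sum {x} \<eta> = \<eta> x" "block_sum A \<eta> = \<eta> x + block_sum (A - {x}) \<eta>" for \<eta>
      using block_sum_remove[OF A(2,1)] by (simp_all add: block_sum_def)
    then show ?thesis by auto
  qed
  have "prob {\<eta>. block_sum A \<eta> = n \<and> \<eta> x \<ge> 1}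
      = prob {\<eta>. block_sum A \<eta> = n} - prob {\<eta>. block_sum A \<eta> = n \<and> \<not> \<eta> x \<ge> 1}"
  proof -
    have "{\<eta>. block_sum A \<eta> = n \<and> \<eta> x \<ge> 1}
        = {\<eta>. block_sum A \<eta> = n} - {\<eta>. block_sum A \<eta> = n \<and> \<not> \<eta> x \<ge> 1}"
      by auto
    moreover have "{\<eta>. block_sum A \<eta> = n \<and> \<not> \<eta> x \<ge> 1} \<in> events"
      unfolding empty_site[symmetric] by measurable
    ultimately show ?thesis
      by (simp add: finite_measure_Diff subset_iff)
  qed
  also have "prob {\<eta>. block_sum A \<eta> = n \<and> \<not> \<eta> x \<ge> 1} = pmf (neg_binomial_pmf r p) n * p"
  proof -
    have "(A - {x}) \<inter> {x} = {}" "{\<eta>. block_sum {x} \<eta> = 0} = {\<eta>. \<eta> x = 0}"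
      by (auto simp: block_sum_def)
    then show ?thesis
      unfolding empty_site[symmetric] using A r p_range
      by (simp add: prob_blocks_joint block_sum_law prob_coordinate)
  qed
  finally show ?thesis
    using neg_binomial_pmf_pascal[OF p_range, of r n] A r by (simp add: block_sum_law)
qed

lemma occupied_events [measurable]: "{\<eta>. block_sum A \<eta> = n \<and> \<eta> x \<ge> 1} \<in> events"
  unfolding Collect_conj_eq by measurable

lemma occupation_given_block_sum:
  assumes A: "finite A"
  shows "(\<integral>\<eta>\<in>{\<eta>\<in>space (nu \<rho>). block_sum A \<eta> = n}. (\<Sum>x\<in>A. g (\<eta> x)) \<partial>nu \<rho>)
           = occupation_mean (card A) n * prob {\<eta>\<in>space (nu \<rho>). block_sum A \<eta> = n}"
proof -
  have indicators: "indicator {\<eta>. block_sum A \<eta> = n} \<eta> * (\<Sum>x\<in>A. g (\<eta> x))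
      = (\<Sum>x\<in>A. indicator {\<eta>. block_sum A \<eta> = n \<and> \<eta> x \<ge> 1} \<eta>)" for \<eta>
    by (simp add: sum_distrib_left g_def indicator_def of_bool_def)
  have "(\<integral>\<eta>\<in>{\<eta>. block_sum A \<eta> = n}. (\<Sum>x\<in>A. g (\<eta> x)) \<partial>nu \<rho>)
      = (\<Sum>x\<in>A. prob {\<eta>. block_sum A \<eta> = n \<and> \<eta> x \<ge> 1})"
  proof -
    have "integrable (nu \<rho>) (indicator {\<eta>. block_sum A \<eta> = n \<and> \<eta> x \<ge> 1} :: _ \<Rightarrow> real)"
      and "expectation (indicator {\<eta>. block_sum A \<eta> = n \<and> \<eta> x \<ge> 1})
             = prob {\<eta>. block_sum A \<eta> = n \<and> \<eta> x \<ge> 1}" for x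
      using occupied_events[of A n x] by (auto intro!: integrable_real_indicator simp: emeasure_eq_measure)
    then show ?thesis
      unfolding set_lebesgue_integral_def by (simp only: indicators real_scaleR_def Bochner_Integration.integral_sum)
  qed
  also have "\<dots> = (\<Sum>x\<in>A. pmf (neg_binomial_pmf (card A) p) n * (real n / (real n + real (card A) - 1)))"
    using occupied_site_law[OF A] by (intro sum.cong) auto
  also have "\<dots> = occupation_mean (card A) n * prob {\<eta>. block_sum A \<eta> = n}"
    using A by (simp add: block_sum_law occupation_mean_def)
  finally show ?thesis by simp
qed

lemma integrable_block_sum: "integrable (nu \<rho>) (\<lambda>\<eta>. real (block_sum A \<eta>))"
proof -
  have "integrable (nu \<rho>) (\<lambda>\<eta>. real (\<eta> x))" for x
    using coordinate_integral(1)[OF integrable_geometric_pmf_power[OF p_range, of 1]] by simp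
  then show ?thesis
    by (simp add: block_sum_def)
qed

text \<open>The conditional block expectation is a.s.\ the block profile of the block sum: the
  occupation part by the discrete conditioning lemma, the linear part because it is a
  function of the block sum.\<close>
lemma cond_block_profile:
  assumes A: "finite A"
  shows "AE \<eta> in nu \<rho>. cond_block \<rho> A \<eta> = block_profile \<rho> (card A) (block_sum A \<eta>)"
proof -
  let ?F = "sum_sigma \<rho> A" and ?K = "card A"
  have F: "?F = vimage_algebra (space (nu \<rho>)) (block_sum A) (count_space UNIV)"
    by (simp add: sum_sigma_def block_sum_def[abs_def])
  interpret finite_measure_subalgebra "nu \<rho>" ?F
    by unfold_locales (unfold F, rule subalgebra_vimage_algebra, simp)
  define L where "L n = real ?K * phi \<rho> + deriv phi \<rho> * (real n - real ?K * \<rho>)" for n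
  have Vg_sum: "(\<Sum>x\<in>A. Vg \<rho> (\<eta> x)) = (\<Sum>x\<in>A. g (\<eta> x)) - L (block_sum A \<eta>)" for \<eta>
    unfolding Vg_def L_def block_sum_def of_nat_sum
    by (simp add: sum_subtractf sum_distrib_left[symmetric] right_diff_distrib[symmetric])
  have "0 \<le> (\<Sum>x\<in>A. g (\<eta> x))" "(\<Sum>x\<in>A. g (\<eta> x)) \<le> real ?K" for \<eta>
    using sum_bounded_above[of A "\<lambda>x. g (\<eta> x)" 1] by (auto simp: g_def intro: sum_nonneg)
  then have int_g: "integrable (nu \<rho>) (\<lambda>\<eta>. \<Sum>x\<in>A. g (\<eta> x))"
    by (intro integrable_const_bound[where B="real ?K"]) (auto simp: g_def)
  have int_L: "integrable (nu \<rho>) (\<lambda>\<eta>. L (block_sum A \<eta>))"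
    unfolding L_def using integrable_block_sum by simp
  have int_occ: "integrable (nu \<rho>) (\<lambda>\<eta>. occupation_mean ?K (block_sum A \<eta>))"
    by (intro integrable_const_bound[where B="real ?K"]) (auto simp: occupation_mean_bounds)
  have "L \<circ> block_sum A \<in> borel_measurable ?F"
    unfolding F by (intro measurable_comp[OF measurable_vimage_algebra1]) auto
  then have "AE \<eta> in nu \<rho>. real_cond_exp (nu \<rho>) ?F (\<lambda>\<eta>. L (block_sum A \<eta>)) \<eta> = L (block_sum A \<eta>)"
    using int_L by (intro real_cond_exp_F_meas) (auto simp: comp_def)
  moreover have "AE \<eta> in nu \<rho>. real_cond_exp (nu \<rho>) ?F (\<lambda>\<eta>. \<Sum>x\<in>A. g (\<eta> x)) \<eta>
      = occupation_mean ?K (block_sum A \<eta>)"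
    unfolding F using occupation_given_block_sum[OF A] int_g int_occ
    by (intro real_cond_exp_discrete) auto
  moreover have "AE \<eta> in nu \<rho>. cond_block \<rho> A \<eta>
      = real_cond_exp (nu \<rho>) ?F (\<lambda>\<eta>. \<Sum>x\<in>A. g (\<eta> x)) \<eta>
        - real_cond_exp (nu \<rho>) ?F (\<lambda>\<eta>. L (block_sum A \<eta>)) \<eta>"
    unfolding cond_block_def Vg_sum using int_g int_L by (rule real_cond_exp_diff)
  ultimately show ?thesis
    by eventually_elim (simp add: block_profile_def L_def)
qed

definition centered_moment :: "nat \<Rightarrow> real" where
  "centered_moment j = (\<integral>k. (real k - \<rho>) ^ j \<partial>G)"

lemma centered_moment_even_nonneg: "even j \<Longrightarrow> centered_moment j \<ge> 0"
  unfolding centered_moment_def by (auto intro!: integral_nonneg_AE simp: zero_le_even_power)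

lemma centered_moment_1: "centered_moment 1 = 0"
proof -
  have "(1 - p) / p = \<rho>"
    using rho_pos by (simp add: p_def field_simps)
  then have "(\<integral>k. real k \<partial>G) = \<rho>"
    using expectation_geometric_pmf[OF p_range] by simp
  then show ?thesis
    using integrable_geometric_pmf_power[OF p_range, of 1] by (simp add: centered_moment_def prob_space)
qed

lemma centered_coordinates:
  defines "Y \<equiv> \<lambda>x \<eta>. real (\<eta> x) - \<rho>"
  shows "indep_vars (\<lambda>_. borel) Y UNIV"
    and "integrable (nu \<rho>) (\<lambda>\<eta>. Y x \<eta> ^ j)"
    and "expectation (\<lambda>\<eta>. Y x \<eta> ^ j) = centered_moment j"
proof -
  show "indep_vars (\<lambda>_. borel) Y UNIV"
    unfolding Y_def by (rule indep_vars_compose2[OF coordinates_indep]) simp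
  show "integrable (nu \<rho>) (\<lambda>\<eta>. Y x \<eta> ^ j)"
    and "expectation (\<lambda>\<eta>. Y x \<eta> ^ j) = centered_moment j"
    unfolding Y_def centered_moment_def
    using coordinate_integral[OF integrable_geometric_pmf_shifted_power[OF p_range]] by auto
qed

text \<open>The uniform bound on the second moment of block profiles.\<close>
definition moment_bound :: real where
  "moment_bound = 2 + 2 * (centered_moment 4 + 3 * (centered_moment 2)\<^sup>2)"

lemma moment_bound_nonneg: "moment_bound \<ge> 0"
  using centered_moment_even_nonneg[of 4] by (simp add: moment_bound_def)

text \<open>Fourth moment of a centred block sum: \<open>E (S\<^sub>A - K\<rho>)\<^sup>4 = K \<mu>\<^sub>4 + 3 K (K - 1) \<sigma>\<^sub>2\<^sup>2 \<le>
  K\<^sup>2 (\<mu>\<^sub>4 + 3 \<sigma>\<^sub>2\<^sup>2)\<close>.\<close>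
lemma centered_block_sum_fourth_moment:
  assumes A: "finite A"
  defines "T \<equiv> \<lambda>\<eta>. real (block_sum A \<eta>) - real (card A) * \<rho>"
  shows "integrable (nu \<rho>) (\<lambda>\<eta>. T \<eta> ^ 4)"
    and "expectation (\<lambda>\<eta>. T \<eta> ^ 4) \<le> (real (card A))\<^sup>2 * (centered_moment 4 + 3 * (centered_moment 2)\<^sup>2)"
proof -
  let ?K = "real (card A)" and ?\<mu> = "centered_moment 4" and ?\<sigma> = "(centered_moment 2)\<^sup>2"
  have T_sum: "T \<eta> = (\<Sum>x\<in>A. real (\<eta> x) - \<rho>)" for \<eta>
    by (simp add: T_def block_sum_def sum_subtractf)
  have mean: "expectation (\<lambda>\<eta>. real (\<eta> x) - \<rho>) = 0" for x
    using centered_coordinates(3)[of x 1] centered_moment_1 by simp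
  note moments = moments_indep_sum[OF centered_coordinates(1) A _ centered_coordinates(2) mean
      centered_coordinates(3) centered_coordinates(3)]
  show "integrable (nu \<rho>) (\<lambda>\<eta>. T \<eta> ^ 4)"
    unfolding T_sum using moments by auto
  have c1: "?K \<le> ?K\<^sup>2"
    by (simp add: power2_eq_square le_square flip: of_nat_mult)
  have c2: "?K * (?K - 1) \<le> ?K\<^sup>2"
    by (simp add: power2_eq_square algebra_simps)
  have "expectation (\<lambda>\<eta>. T \<eta> ^ 4) = ?K * ?\<mu> + ?K * (?K - 1) * (3 * ?\<sigma>)"
    unfolding T_sum using moments by (simp add: algebra_simps)
  also have "\<dots> \<le> ?K\<^sup>2 * ?\<mu> + ?K\<^sup>2 * (3 * ?\<sigma>)"
    using centered_moment_even_nonneg[of 4]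
    by (intro add_mono mult_right_mono[OF c1] mult_right_mono[OF c2]) auto
  finally show "expectation (\<lambda>\<eta>. T \<eta> ^ 4) \<le> ?K\<^sup>2 * (?\<mu> + 3 * ?\<sigma>)"
    by (simp add: algebra_simps)
qed

lemma block_profile_second_moment:
  assumes A: "finite A" "A \<noteq> {}"
  shows "integrable (nu \<rho>) (\<lambda>\<eta>. (block_profile \<rho> (card A) (block_sum A \<eta>))\<^sup>2)"
    and "expectation (\<lambda>\<eta>. (block_profile \<rho> (card A) (block_sum A \<eta>))\<^sup>2) \<le> moment_bound"
proof -
  let ?K = "real (card A)" and ?T = "\<lambda>\<eta>. real (block_sum A \<eta>) - real (card A) * \<rho>"
  have K: "card A \<ge> 1" "?K > 0"
    using A by (auto simp: Suc_le_eq card_gt_0_iff)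
  note fourth = centered_block_sum_fourth_moment[OF A(1)]
  have bound: "(block_profile \<rho> (card A) (block_sum A \<eta>))\<^sup>2 \<le> 2 + 2 / ?K\<^sup>2 * ?T \<eta> ^ 4" for \<eta>
    using block_profile_square_le[OF K(1), of \<rho> "block_sum A \<eta>"] rho_pos by simp
  have int_bound: "integrable (nu \<rho>) (\<lambda>\<eta>. 2 + 2 / ?K\<^sup>2 * ?T \<eta> ^ 4)"
    using fourth(1) by simp
  show int: "integrable (nu \<rho>) (\<lambda>\<eta>. (block_profile \<rho> (card A) (block_sum A \<eta>))\<^sup>2)"
    using bound by (intro Bochner_Integration.integrable_bound[OF int_bound]) auto
  have "expectation (\<lambda>\<eta>. (block_profile \<rho> (card A) (block_sum A \<eta>))\<^sup>2)
      \<le> expectation (\<lambda>\<eta>. 2 + 2 / ?K\<^sup>2 * ?T \<eta> ^ 4)"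
    by (rule integral_mono[OF int int_bound bound])
  also have "\<dots> = 2 + 2 / ?K\<^sup>2 * expectation (\<lambda>\<eta>. ?T \<eta> ^ 4)"
    using fourth(1) by simp
  also have "\<dots> \<le> 2 + 2 / ?K\<^sup>2 * (?K\<^sup>2 * (centered_moment 4 + 3 * (centered_moment 2)\<^sup>2))"
    using fourth(2) K by (intro add_left_mono mult_left_mono) auto
  also have "\<dots> = moment_bound"
    using K by (simp add: moment_bound_def)
  finally show "expectation (\<lambda>\<eta>. (block_profile \<rho> (card A) (block_sum A \<eta>))\<^sup>2) \<le> moment_bound" .
qed

lemma block_profile_variance:
  assumes A: "finite A" "A \<noteq> {}"
  defines "F \<equiv> \<lambda>\<eta>. block_profile \<rho> (card A) (block_sum A \<eta>)"
  shows "integrable (nu \<rho>) F" and "integrable (nu \<rho>) (\<lambda>\<eta>. (F \<eta>)\<^sup>2)" and "variance F \<le> moment_bound"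
proof -
  show int_sq: "integrable (nu \<rho>) (\<lambda>\<eta>. (F \<eta>)\<^sup>2)"
    unfolding F_def by (rule block_profile_second_moment(1)[OF A])
  have "F \<in> borel_measurable (nu \<rho>)"
    unfolding F_def by measurable
  then show int: "integrable (nu \<rho>) F"
    using int_sq by (rule square_integrable_imp_integrable)
  have "variance F \<le> expectation (\<lambda>\<eta>. (F \<eta>)\<^sup>2)"
    by (rule variance_le_second_moment[OF int int_sq])
  also have "expectation (\<lambda>\<eta>. (F \<eta>)\<^sup>2) \<le> moment_bound"
    unfolding F_def by (rule block_profile_second_moment(2)[OF A])
  finally show "variance F \<le> moment_bound" .
qed

lemma V2_block_profiles:
  assumes "K \<ge> 1"
  shows "AE \<eta> in nu \<rho>. V2 \<rho> K L a \<eta>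
    = (\<Sum>j\<in>{1..L}. block_profile \<rho> K (block_sum (block a K j) \<eta>))
      - block_profile \<rho> (L * K) (block_sum {a ..< a + int (L * K)} \<eta>)"
proof -
  have "AE \<eta> in nu \<rho>. \<forall>j\<in>{1..L}.
      cond_block \<rho> (block a K j) \<eta> = block_profile \<rho> K (block_sum (block a K j) \<eta>)"
  proof (rule AE_finite_allI)
    fix j :: nat assume "j \<in> {1..L}"
    then show "AE \<eta> in nu \<rho>. cond_block \<rho> (block a K j) \<eta> = block_profile \<rho> K (block_sum (block a K j) \<eta>)"
      using cond_block_profile[of "block a K j"] card_block[of j a K] by (simp add: block_def)
  qed simp
  moreover have "AE \<eta> in nu \<rho>. cond_block \<rho> {a ..< a + int (L * K)} \<eta>
      = block_profile \<rho> (L * K) (block_sum {a ..< a + int (L * K)} \<eta>)"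
    using cond_block_profile[of "{a ..< a + int (L * K)}"] by (simp del: of_nat_mult)
  ultimately show ?thesis
    by eventually_elim (simp add: V2_blocks)
qed

text \<open>The variance bound: the small-block profiles are independent, and every profile has
  variance at most \<open>moment_bound\<close>.\<close>
lemma variance_V2_le:
  assumes K: "K \<ge> 1" and L: "L \<ge> 1"
  shows "variance_of (nu \<rho>) (V2 \<rho> K L a) \<le> 4 * moment_bound * real L"
proof -
  define I where "I = {a ..< a + int (L * K)}"
  define F where "F j \<eta> = block_profile \<rho> K (block_sum (block a K j) \<eta>)" for j \<eta>
  define F\<^sub>I where "F\<^sub>I \<eta> = block_profile \<rho> (L * K) (block_sum I \<eta>)" for \<eta>
  have block: "finite (block a K j)" "block a K j \<noteq> {}" "card (block a K j) = K" if "j \<ge> 1" for j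
    using card_block[OF that, of a K] K that by (auto simp: block_def)
  have I: "finite I" "I \<noteq> {}" "card I = L * K"
    using K L by (auto simp: I_def simp del: of_nat_mult)
  have "variance_of (nu \<rho>) (V2 \<rho> K L a) = variance (\<lambda>\<eta>. (\<Sum>j\<in>{1..L}. F j \<eta>) - F\<^sub>I \<eta>)"
  proof -
    have "V2 \<rho> K L a \<in> borel_measurable (nu \<rho>)"
      unfolding V2_blocks cond_block_def by measurable
    then show ?thesis
      using V2_block_profiles[OF K, of L a]
      by (subst variance_of_cong_AE) (auto simp: variance_of_def F_def F\<^sub>I_def I_def)
  qed
  also have "\<dots> \<le> 2 * moment_bound * real (card {1..L}) + 2 * moment_bound"
  proof (rule variance_indep_sum_minus_le)
    fix j assume "j \<in> {1..L}"
    then show "integrable (nu \<rho>) (F j)" "integrable (nu \<rho>) (\<lambda>\<eta>. (F j \<eta>)\<^sup>2)"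
      "variance (F j) \<le> moment_bound"
      using block_profile_variance[OF block(1,2), of j] block(3)[of j] unfolding F_def by auto
  next
    fix i j assume "i \<in> {1..L}" "j \<in> {1..L}" "i \<noteq> j"
    then show "indep_var borel (F i) borel (F j)"
      unfolding F_def using blocks_disjoint[of i j] by (intro block_functions_indep) auto
  next
    show "integrable (nu \<rho>) F\<^sub>I" "integrable (nu \<rho>) (\<lambda>\<eta>. (F\<^sub>I \<eta>)\<^sup>2)" "variance F\<^sub>I \<le> moment_bound"
      using block_profile_variance[OF I(1,2)] unfolding F\<^sub>I_def I(3) by simp_all
  qed simp
  also have "\<dots> \<le> 4 * moment_bound * real L"
    using L moment_bound_nonneg mult_right_mono[of 1 "real L" moment_bound] by simp
  finally show ?thesis .
qed

end


theorem mainTheorem11: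
  fixes \<rho> :: real
  assumes "\<rho> > 0"
  shows "\<exists>C::real. \<forall>K L :: nat. \<forall>a :: int. K \<ge> 1 \<longrightarrow> L \<ge> 1 \<longrightarrow>
           variance_of (nu \<rho>) (V2 \<rho> K L a) \<le> C * real L"
proof -
  interpret geometric_field \<rho>
    by unfold_locales (rule assms)
  show ?thesis
    using variance_V2_le by blast
qed

end
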